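(* Let $A\in\mathbb{R}^{m\times n}$, and let $p:[0,\infty)\to\mathbb{R}$ be concave, increasing and continuous with right derivative $p'(0+)>0$. For $x\in\mathbb{R}^n$ define $R(x)\in\mathbb{R}^n$ by $$R(x)_i=\mathrm{sgn}(x_i)\Big(1-\frac{d_i(x)}{p'(0+)}\Big),$$ where $d_i(x)=p'(0+)$ if $x_i=0$, and, if $x_i\neq0$, $d_i(x)$ is any element of the superdifferential $[p'_+(|x_i|),p'_-(|x_i|)]$ of the concave function $p$ at $|x_i|$, chosen depending only on $|x_i|$. Let $\bar x\in\mathbb{R}^n$ have support $T$ and equal-height peaks, i.e. $|\bar x_i|=|\bar x_j|$ for all $i,j\in T$. Consider the iteration $x^{(0)}=\mathbf{0}$ and $$x^{(k+1)}\in\arg\min_{x\in\mathbb{R}^n}\ \|x\|_1-\langle R(x^{(k)}),x\rangle\quad\text{s.t.}\quad Ax=A\bar x,\qquad k=0,1,2,\dots$$ If basis pursuit uniquely recovers $\bar x$, i.e. $\bar x$ is the unique solution of $\min_x\|x\|_1$ s.t. $Ax=A\bar x$, then so does the iteration: for every $k\ge0$ the minimization problem defining $x^{(k+1)}$ has $\bar x$ as its unique solution, so $x^{(k)}=\bar x$ for all $k\ge1$.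
   Context: $\mathrm{sgn}(t)=t/|t|$ for $t\neq0$ and $\mathrm{sgn}(0)=0$. The support of $\bar x$ is $\{i:\bar x_i\neq0\}$. *)

theory Defs
  imports "HOL-Analysis.Analysis"
begin

definition l1norm :: "real ^ 'n \<Rightarrow> real" where
  "l1norm x = (\<Sum>i\<in>UNIV. \<bar>x $ i\<bar>)"

definition superdiff :: "(real \<Rightarrow> real) \<Rightarrow> real \<Rightarrow> real set" where
  "superdiff p t = {g. \<forall>s\<ge>0. p s \<le> p t + g * (s - t)}"

text \<open>The map R; d0 = p'(0+), dsel t = chosen supergradient at t > 0.\<close>
definition Rmap :: "real \<Rightarrow> (real \<Rightarrow> real) \<Rightarrow> real ^ 'n \<Rightarrow> real ^ 'n" where
  "Rmap d0 dsel x = (\<chi> i. sgn (x $ i) *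
      (1 - (if x $ i = 0 then d0 else dsel \<bar>x $ i\<bar>) / d0))"

definition iter_obj :: "real ^ 'n \<Rightarrow> real ^ 'n \<Rightarrow> real" where
  "iter_obj r x = l1norm x - r \<bullet> x"

definition is_argmin_affine :: "(real ^ 'n \<Rightarrow> real) \<Rightarrow> real ^ 'n ^ 'm \<Rightarrow> real ^ 'm \<Rightarrow> real ^ 'n \<Rightarrow> bool" where
  "is_argmin_affine f A b x \<longleftrightarrow> A *v x = b \<and> (\<forall>y. A *v y = b \<longrightarrow> f x \<le> f y)"

definition is_unique_argmin_affine :: "(real ^ 'n \<Rightarrow> real) \<Rightarrow> real ^ 'n ^ 'm \<Rightarrow> real ^ 'm \<Rightarrow> real ^ 'n \<Rightarrow> bool" where
  "is_unique_argmin_affine f A b x \<longleftrightarrow> is_argmin_affine f A b x \<and> (\<forall>y. is_argmin_affine f A b y \<longrightarrow> y = x)"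

end

theory Submission
  imports Defs
begin

(*
  Every supergradient of an increasing concave p at a point t > 0 lies in [0, p'(0+)], so with
  equal peaks R(xbar) = c * sgn xbar for some 0 <= c <= 1, while R(0) = 0.  The subproblem
  objective with weights c * sgn xbar splits as (1 - c) |y|_1 + c (|y|_1 - <sgn xbar, y>), and
  both summands are minimised at xbar.  A feasible minimiser y therefore either satisfies
  |y|_1 <= |xbar|_1 directly (c < 1) or has signs consistent with xbar (c = 1); in the latter
  case |.|_1 is affine on the feasible line through y and xbar slightly beyond xbar, and
  optimality of xbar for basis pursuit again gives |y|_1 <= |xbar|_1.  Uniqueness for basis
  pursuit then forces y = xbar, so all iterates stay in {0, xbar}.
*)

lemma concave_on_secant_le_right_deriv:
  fixes p :: "real \<Rightarrow> real"
  assumes concave: "concave_on {a..} p"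
    and deriv: "(p has_real_derivative d) (at a within {a..})"
    and "a < b"
  shows "p b - p a \<le> d * (b - a)"
proof -
  have lim: "((\<lambda>y. (p y - p a) / (y - a)) \<longlongrightarrow> d) (at a within {a..})"
    using deriv by (simp add: has_field_derivative_iff)
  have "\<forall>\<^sub>F y in at a within {a..}. y \<in> {a<..<b}"
  proof -
    have "\<forall>\<^sub>F y in at a within {a..}. a \<le> y \<and> y \<noteq> a"
      by (simp add: eventually_at_filter)
    moreover have "\<forall>\<^sub>F y in at a within {a..}. y < b"
      using \<open>a < b\<close> by (intro order_tendstoD(2)[OF tendsto_ident_at])
    ultimately show ?thesis by eventually_elim auto
  qed
  then have "\<forall>\<^sub>F y in at a within {a..}. (p b - p a) / (b - a) \<le> (p y - p a) / (y - a)"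
  proof eventually_elim
    case (elim y)
    define t where "t = (y - a) / (b - a)"
    have t: "0 < t" "t < 1" using elim by (auto simp: t_def field_simps)
    have "t * (b - a) = y - a" using \<open>a < b\<close> by (simp add: t_def)
    then have "y = (1 - t) * a + t * b" by (simp add: algebra_simps)
    have "(1 - t) * p a + t * p b \<le> p y"
      using concave_onD[OF concave, of t a b] t \<open>a < b\<close> \<open>y = _\<close> by simp
    then have "t * (p b - p a) \<le> p y - p a" by (simp add: algebra_simps)
    then show ?case using elim by (simp add: t_def field_simps)
  qed
  from tendsto_lowerbound[OF lim this] have "(p b - p a) / (b - a) \<le> d"
    by (simp add: at_within_Ici_at_right)
  then show ?thesis using \<open>a < b\<close> by (simp add: field_simps)
qed

lemma superdiff_nonneg:
  assumes "mono_on {0..} p" and "t \<ge> 0" and "g \<in> superdiff p t"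
  shows "0 \<le> g"
proof -
  have "p t \<le> p (t + 1)" using assms by (intro mono_onD[OF assms(1)]) auto
  also have "\<dots> \<le> p t + g" using assms by (auto simp: superdiff_def dest: spec[of _ "t + 1"])
  finally show ?thesis by simp
qed

lemma superdiff_le_right_deriv:
  assumes "concave_on {0..} p" and "(p has_real_derivative d) (at 0 within {0..})"
    and "t > 0" and "g \<in> superdiff p t"
  shows "g \<le> d"
proof -
  have "p 0 \<le> p t - g * t" using assms(4) by (auto simp: superdiff_def dest: spec[of _ 0])
  moreover have "p t - p 0 \<le> d * t"
    using concave_on_secant_le_right_deriv[OF assms(1,2,3)] by simp
  ultimately have "g * t \<le> d * t" by simp
  then show ?thesis using \<open>t > 0\<close> by simp
qed

(* Componentwise sign: HOL's sgn on vectors is normalisation x / norm x instead. *)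
definition sign_vec :: "real ^ 'n \<Rightarrow> real ^ 'n" where
  "sign_vec x = (\<chi> i. sgn (x $ i))"

lemma inner_sign_vec_le_l1norm: "sign_vec x \<bullet> y \<le> l1norm y"
  unfolding sign_vec_def l1norm_def inner_vec_def
  by (intro sum_mono) (auto simp: sgn_real_def abs_if)

lemma inner_sign_vec_self: "sign_vec x \<bullet> x = l1norm x"
  unfolding sign_vec_def l1norm_def inner_vec_def
  by (intro sum.cong) (auto simp: sgn_real_def abs_if)

lemma inner_sign_vec_eq_l1norm_imp_sign_consistent:
  assumes "sign_vec x \<bullet> y = l1norm y"
  shows "sgn (x $ i) * y $ i = \<bar>y $ i\<bar>"
proof -
  have "(\<Sum>j\<in>UNIV. \<bar>y $ j\<bar> - sgn (x $ j) * y $ j) = 0"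
    using assms by (simp add: sign_vec_def l1norm_def inner_vec_def sum_subtractf)
  moreover have "\<forall>j\<in>UNIV. 0 \<le> \<bar>y $ j\<bar> - sgn (x $ j) * y $ j"
    by (auto simp: sgn_real_def abs_if)
  ultimately show ?thesis by (simp add: sum_nonneg_eq_0_iff)
qed

lemma l1norm_affine_along_sign_consistent:
  fixes x y :: "real ^ 'n"
  assumes "\<And>i. sgn (x $ i) * y $ i = \<bar>y $ i\<bar>"
  shows "\<forall>\<^sub>F t in at_right 0. l1norm (x + t *\<^sub>R (x - y)) = (1 + t) * l1norm x - t * l1norm y"
proof -
  have "\<forall>\<^sub>F t in at_right 0. \<bar>x $ i + t * (x $ i - y $ i)\<bar> = (1 + t) * \<bar>x $ i\<bar> - t * \<bar>y $ i\<bar>" for i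
  proof (cases "x $ i = 0")
    case True
    then show ?thesis using assms[of i] by simp
  next
    case False
    have y: "y $ i = sgn (x $ i) * \<bar>y $ i\<bar>"
      using assms[of i] False by (auto simp: sgn_real_def split: if_splits)
    have x: "x $ i = sgn (x $ i) * \<bar>x $ i\<bar>" by (simp add: sgn_mult_abs)
    have "((\<lambda>t. (1 + t) * \<bar>x $ i\<bar> - t * \<bar>y $ i\<bar>) \<longlongrightarrow> \<bar>x $ i\<bar>) (at_right 0)"
      by (auto intro!: tendsto_eq_intros)
    then have "\<forall>\<^sub>F t in at_right 0. 0 < (1 + t) * \<bar>x $ i\<bar> - t * \<bar>y $ i\<bar>"
      using False by (intro order_tendstoD(1)) auto
    then show ?thesis
    proof eventually_elim
      case (elim t)
      have "x $ i + t * (x $ i - y $ i) = sgn (x $ i) * ((1 + t) * \<bar>x $ i\<bar> - t * \<bar>y $ i\<bar>)"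
        by (subst (1 2) x, subst y) (simp add: algebra_simps)
      then show ?case using elim False by (simp add: abs_mult)
    qed
  qed
  then have "\<forall>\<^sub>F t in at_right 0. \<forall>i. \<bar>x $ i + t * (x $ i - y $ i)\<bar> = (1 + t) * \<bar>x $ i\<bar> - t * \<bar>y $ i\<bar>"
    by (rule eventually_all_finite)
  then show ?thesis
    by eventually_elim (simp add: l1norm_def sum_subtractf sum_distrib_left)
qed

lemma is_argmin_affineD: "is_argmin_affine f A b x \<Longrightarrow> A *v y = b \<Longrightarrow> f x \<le> f y"
  by (simp add: is_argmin_affine_def)

lemma is_unique_argmin_affineD:
  assumes "is_unique_argmin_affine f A b x" and "A *v y = b" and "f y \<le> f x"
  shows "y = x"
proof -
  have "f x \<le> f z" if "A *v z = b" for z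
    using assms(1) that by (simp add: is_unique_argmin_affine_def is_argmin_affine_def)
  then have "is_argmin_affine f A b y"
    using assms(2,3) unfolding is_argmin_affine_def by (blast intro: order_trans)
  then show ?thesis using assms(1) by (simp add: is_unique_argmin_affine_def)
qed

lemma sign_consistent_feasible_l1norm_le:
  fixes A :: "real ^ 'n ^ 'm"
  assumes x: "is_argmin_affine l1norm A (A *v x) x"
    and y: "A *v y = A *v x" and sign: "sign_vec x \<bullet> y = l1norm y"
  shows "l1norm y \<le> l1norm x"
proof -
  have "\<forall>\<^sub>F t in at_right 0. 0 < t \<and>
      l1norm (x + t *\<^sub>R (x - y)) = (1 + t) * l1norm x - t * l1norm y"
    using eventually_at_right_less l1norm_affine_along_sign_consistent
      inner_sign_vec_eq_l1norm_imp_sign_consistent[OF sign]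
    by (intro eventually_conj) auto
  then obtain t where t: "0 < t"
    and w: "l1norm (x + t *\<^sub>R (x - y)) = (1 + t) * l1norm x - t * l1norm y"
    by (auto dest: eventually_happens simp: trivial_limit_at_right_real)
  have "A *v (x + t *\<^sub>R (x - y)) = A *v x"
    by (simp add: matrix_vector_right_distrib matrix_vector_mult_diff_distrib
        matrix_vector_mult_scaleR y)
  from is_argmin_affineD[OF x this] have "t * l1norm y \<le> t * l1norm x"
    unfolding w by (simp add: algebra_simps)
  then show ?thesis using t by simp
qed

lemma reweighted_l1_unique_argmin:
  fixes A :: "real ^ 'n ^ 'm" and c :: real
  assumes c: "0 \<le> c" "c \<le> 1"
    and bp: "is_unique_argmin_affine l1norm A (A *v x) x"
  shows "is_unique_argmin_affine (iter_obj (c *\<^sub>R sign_vec x)) A (A *v x) x"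
proof -
  have bp_min: "is_argmin_affine l1norm A (A *v x) x"
    using bp by (simp add: is_unique_argmin_affine_def)
  define gap where "gap y = (1 - c) * (l1norm y - l1norm x) + c * (l1norm y - sign_vec x \<bullet> y)"
    for y
  have gap_eq: "iter_obj (c *\<^sub>R sign_vec x) y - iter_obj (c *\<^sub>R sign_vec x) x = gap y" for y
    by (simp add: gap_def iter_obj_def inner_sign_vec_self algebra_simps)
  have l1_gap: "0 \<le> (1 - c) * (l1norm y - l1norm x)" if "A *v y = A *v x" for y
    using is_argmin_affineD[OF bp_min that] c by simp
  have sign_gap: "0 \<le> c * (l1norm y - sign_vec x \<bullet> y)" for y
    using inner_sign_vec_le_l1norm[of x y] c by simp
  have eq: "y = x" if y: "A *v y = A *v x" and "gap y \<le> 0" for y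
  proof (cases "c = 1")
    case True
    then have "sign_vec x \<bullet> y = l1norm y"
      using \<open>gap y \<le> 0\<close> inner_sign_vec_le_l1norm[of x y] by (simp add: gap_def)
    from sign_consistent_feasible_l1norm_le[OF bp_min y this] show ?thesis
      using is_unique_argmin_affineD[OF bp y] by simp
  next
    case False
    then have "(1 - c) * (l1norm y - l1norm x) \<le> 0"
      using \<open>gap y \<le> 0\<close> sign_gap[of y] by (simp add: gap_def)
    then have "l1norm y \<le> l1norm x"
      using False c by (simp add: mult_le_0_iff)
    then show ?thesis using is_unique_argmin_affineD[OF bp y] by simp
  qed
  have nonneg: "0 \<le> gap y" if "A *v y = A *v x" for y
    using l1_gap[OF that] sign_gap[of y] by (simp add: gap_def)
  show ?thesis
    unfolding is_unique_argmin_affine_def is_argmin_affine_def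
  proof (intro conjI allI impI)
    fix y assume "A *v y = A *v x"
    then show "iter_obj (c *\<^sub>R sign_vec x) x \<le> iter_obj (c *\<^sub>R sign_vec x) y"
      using nonneg gap_eq[of y] by fastforce
  next
    fix y assume "A *v y = A *v x \<and>
      (\<forall>z. A *v z = A *v x \<longrightarrow> iter_obj (c *\<^sub>R sign_vec x) y \<le> iter_obj (c *\<^sub>R sign_vec x) z)"
    then have "A *v y = A *v x" and "gap y \<le> 0"
      using gap_eq[of y] by auto
    then show "y = x" by (rule eq)
  qed simp
qed

lemma Rmap_zero: "Rmap d0 dsel 0 = 0"
  by (simp add: Rmap_def vec_eq_iff)

lemma Rmap_equal_peaks:
  assumes "\<And>i. x $ i \<noteq> 0 \<Longrightarrow> \<bar>x $ i\<bar> = h"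
  shows "Rmap d0 dsel x = (1 - dsel h / d0) *\<^sub>R sign_vec x"
proof -
  have "Rmap d0 dsel x $ i = ((1 - dsel h / d0) *\<^sub>R sign_vec x) $ i" for i
    using assms[of i] by (cases "x $ i = 0") (simp_all add: Rmap_def sign_vec_def)
  then show ?thesis by (simp add: vec_eq_iff)
qed

lemma equal_peaks_height:
  fixes x :: "real ^ 'n"
  assumes "\<And>i j. x $ i \<noteq> 0 \<Longrightarrow> x $ j \<noteq> 0 \<Longrightarrow> \<bar>x $ i\<bar> = \<bar>x $ j\<bar>"
  obtains h where "h > 0" and "\<And>i. x $ i \<noteq> 0 \<Longrightarrow> \<bar>x $ i\<bar> = h"
proof (cases "x = 0")
  case True
  then show ?thesis using that[of 1] by simp
next
  case False
  then obtain j where "x $ j \<noteq> 0" by (auto simp: vec_eq_iff)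
  show ?thesis
  proof (rule that)
    show "\<bar>x $ j\<bar> > 0" using \<open>x $ j \<noteq> 0\<close> by simp
    show "\<bar>x $ i\<bar> = \<bar>x $ j\<bar>" if "x $ i \<noteq> 0" for i
      using assms[OF that \<open>x $ j \<noteq> 0\<close>] .
  qed
qed

theorem theorem4p2:
  fixes A :: "real ^ 'n ^ 'm"
    and p :: "real \<Rightarrow> real"
    and d0 :: real
    and dsel :: "real \<Rightarrow> real"
    and xbar :: "real ^ 'n"
    and xs :: "nat \<Rightarrow> real ^ 'n"
  assumes concave: "concave_on {0..} p"
    and incr: "mono_on {0..} p"
    and cont: "continuous_on {0..} p"
    and rderiv: "(p has_real_derivative d0) (at 0 within {0..})"
    and d0_pos: "d0 > 0"
    and dsel: "\<And>t. t > 0 \<Longrightarrow> dsel t \<in> superdiff p t"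
    and equal_peaks: "\<And>i j. xbar $ i \<noteq> 0 \<Longrightarrow> xbar $ j \<noteq> 0 \<Longrightarrow> \<bar>xbar $ i\<bar> = \<bar>xbar $ j\<bar>"
    and x0: "xs 0 = 0"
    and step: "\<And>k. is_argmin_affine (iter_obj (Rmap d0 dsel (xs k))) A (A *v xbar) (xs (Suc k))"
    and bp: "is_unique_argmin_affine l1norm A (A *v xbar) xbar"
  shows "(\<forall>k. is_unique_argmin_affine (iter_obj (Rmap d0 dsel (xs k))) A (A *v xbar) xbar)
       \<and> (\<forall>k\<ge>1. xs k = xbar)"
proof -
  obtain h where h: "h > 0" and peaks: "\<And>i. xbar $ i \<noteq> 0 \<Longrightarrow> \<bar>xbar $ i\<bar> = h"
    using equal_peaks_height[OF equal_peaks] by blast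
  have "0 \<le> dsel h" "dsel h \<le> d0"
    using superdiff_nonneg[OF incr _ dsel] superdiff_le_right_deriv[OF concave rderiv _ dsel] h
    by auto
  then have c: "0 \<le> 1 - dsel h / d0" "1 - dsel h / d0 \<le> 1"
    using d0_pos by (auto simp: field_simps)
  have unique: "is_unique_argmin_affine (iter_obj (Rmap d0 dsel x)) A (A *v xbar) xbar"
    if "x \<in> {0, xbar}" for x
  proof -
    have "Rmap d0 dsel x = (if x = 0 then 0 else 1 - dsel h / d0) *\<^sub>R sign_vec xbar"
      using that by (auto simp: Rmap_zero Rmap_equal_peaks[OF peaks])
    then show ?thesis
      using reweighted_l1_unique_argmin[OF _ _ bp] c by simp
  qed
  have iterates: "xs k \<in> {0, xbar}" for k
  proof (induction k)
    case (Suc k)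
    from unique[OF this] step[of k] show ?case by (simp add: is_unique_argmin_affine_def)
  qed (simp add: x0)
  have "xs (Suc k) = xbar" for k
    using unique[OF iterates] step[of k] by (simp add: is_unique_argmin_affine_def)
  then have "xs k = xbar" if "k \<ge> 1" for k
    using that by (cases k) auto
  then show ?thesis
    using unique[OF iterates] by blast
qed

end
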